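(* Let $\mathcal{F}=\widetilde{M}$ be an indecomposable coherent sheaf on $\mathbb{A}^1=\operatorname{MSpec}(\langle t\rangle)$, and let $U=\operatorname{MSpec}(\langle t,t^{-1}\rangle)\subset\mathbb{A}^1$ be the open subset where $t$ is invertible. Then: (1) if $\Gamma_M$ is of type 1, $\mathcal{F}|_U\cong 0$; (2) if $\Gamma_M$ is of type 2, $\mathcal{F}|_U\cong\mathcal{L}$; (3) if $\Gamma_M$ is of type 3 with oriented cycle of length $k$, $\mathcal{F}|_U\cong\mathcal{C}_k$.
   Context: $\langle t\rangle=\{0,1,t,t^2,\dots\}$ and $\langle t,t^{-1}\rangle=\{0\}\cup\{t^n:n\in\mathbb Z\}$. A module over such a monoid is a pointed set $(M,* )$ with an action satisfying $1m=m$, $a(bm)=(ab)m$, $0m=*$. Coherent sheaves on $\mathbb A^1$ are $\widetilde M$ with $M$ a finitely generated $\langle t\rangle$-module, and the restriction of $\widetilde M$ to $U$ is $\widetilde{M_t}$, where $M_t$ is the localization at powers of $t$. $\mathcal F$ indecomposable means non-zero and not a direct sum (wedge sum) of two non-zero coherent sheaves. The graph $\Gamma_M$ has vertex set $M\setminus\{*\}$ and an edge $m\to tm$ whenever $tm\ne *$. $\Gamma_M$ is of type 1 if it is a rooted tree (underlying undirected graph a tree with a unique root, i.e. vertex without outgoing edge, reached by a directed path from every vertex); of type 2 if obtained from a finite rooted tree by joining its root to the initial vertex of an infinite directed ray $v_0\to v_1\to\cdots$; of type 3 if obtained from an oriented directed cycle by attaching rooted trees to it. $\mathcal{L}=\widetilde{\langle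 t,t^{-1}\rangle}$ and $\mathcal{C}_k=\widetilde{C_k}$ where $C_k=\{*,1,t,\dots,t^{k-1}\}$ with $t$ acting by the cyclic permutation $1\mapsto t\mapsto\cdots\mapsto t^{k-1}\mapsto1$. *)

theory Defs
  imports Main
begin

(* A module over the monoid <t> = {0,1,t,t^2,...}: a pointed set (M,z) with the
   action of t given by an endomorphism T (then t^n acts as T^^n and 0 acts as
   the constant z; the axioms force T z = z). *)
definition tmod :: "'a set \<Rightarrow> 'a \<Rightarrow> ('a \<Rightarrow> 'a) \<Rightarrow> bool" where
  "tmod M z T \<longleftrightarrow> z \<in> M \<and> (\<forall>m\<in>M. T m \<in> M) \<and> T z = z"

definition fin_gen :: "'a set \<Rightarrow> 'a \<Rightarrow> ('a \<Rightarrow> 'a) \<Rightarrow> bool" where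
  "fin_gen M z T \<longleftrightarrow> (\<exists>S. finite S \<and> S \<subseteq> M \<and>
      (\<forall>m\<in>M. m = z \<or> (\<exists>s\<in>S. \<exists>n. (T ^^ n) s = m)))"

definition submod :: "'a set \<Rightarrow> 'a set \<Rightarrow> 'a \<Rightarrow> ('a \<Rightarrow> 'a) \<Rightarrow> bool" where
  "submod N M z T \<longleftrightarrow> z \<in> N \<and> N \<subseteq> M \<and> (\<forall>n\<in>N. T n \<in> N)"

definition indecomposable :: "'a set \<Rightarrow> 'a \<Rightarrow> ('a \<Rightarrow> 'a) \<Rightarrow> bool" where
  "indecomposable M z T \<longleftrightarrow> M \<noteq> {z} \<and>
     \<not> (\<exists>N P. submod N M z T \<and> submod P M z T \<and> N \<inter> P = {z} \<and> N \<union> P = M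
              \<and> N \<noteq> {z} \<and> P \<noteq> {z})"

(* Graph with vertex set S and an edge v -> T v whenever T v \<in> S.
   (For S = M - {z} this is exactly Gamma_M.) *)
definition uadj :: "'a set \<Rightarrow> ('a \<Rightarrow> 'a) \<Rightarrow> 'a \<Rightarrow> 'a \<Rightarrow> bool" where
  "uadj S T u v \<longleftrightarrow> u \<in> S \<and> v \<in> S \<and> (v = T u \<or> u = T v)"

(* underlying undirected (multi)graph is a tree: connected, no loops,
   no parallel edges, no simple cycles of length \<ge> 3 *)
definition undirected_tree :: "'a set \<Rightarrow> ('a \<Rightarrow> 'a) \<Rightarrow> bool" where
  "undirected_tree S T \<longleftrightarrow>
     (\<forall>u\<in>S. \<forall>v\<in>S. (uadj S T)\<^sup>*\<^sup>* u v) \<and>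
     (\<forall>v\<in>S. T v \<noteq> v) \<and>
     (\<forall>u\<in>S. \<forall>v\<in>S. u \<noteq> v \<and> T u = v \<longrightarrow> T v \<noteq> u) \<and>
     \<not> (\<exists>xs. 3 \<le> length xs \<and> distinct xs \<and> set xs \<subseteq> S \<and>
            (\<forall>i<length xs. uadj S T (xs ! i) (xs ! ((i + 1) mod length xs))))"

definition rooted_tree :: "'a set \<Rightarrow> ('a \<Rightarrow> 'a) \<Rightarrow> bool" where
  "rooted_tree S T \<longleftrightarrow> undirected_tree S T \<and>
     (\<exists>!r. r \<in> S \<and> T r \<notin> S) \<and>
     (\<forall>v\<in>S. \<forall>r\<in>S. T r \<notin> S \<longrightarrow>
         (\<exists>n. (\<forall>i\<le>n. (T ^^ i) v \<in> S) \<and> (T ^^ n) v = r))"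

definition gamma_type1 :: "'a set \<Rightarrow> 'a \<Rightarrow> ('a \<Rightarrow> 'a) \<Rightarrow> bool" where
  "gamma_type1 M z T \<longleftrightarrow> rooted_tree (M - {z}) T"

(* finite rooted tree Tr whose root is joined to the initial vertex v0 of an
   infinite directed ray v0 -> T v0 -> T^2 v0 -> ... *)
definition gamma_type2 :: "'a set \<Rightarrow> 'a \<Rightarrow> ('a \<Rightarrow> 'a) \<Rightarrow> bool" where
  "gamma_type2 M z T \<longleftrightarrow> (\<exists>Tr v0.
     finite Tr \<and> rooted_tree Tr T \<and>
     (\<forall>i j. (T ^^ i) v0 = (T ^^ j) v0 \<longrightarrow> i = j) \<and>
     Tr \<inter> range (\<lambda>i. (T ^^ i) v0) = {} \<and>
     M - {z} = Tr \<union> range (\<lambda>i. (T ^^ i) v0) \<and>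
     (\<forall>r\<in>Tr. T r \<notin> Tr \<longrightarrow> T r = v0))"

definition gamma_type3 :: "'a set \<Rightarrow> 'a \<Rightarrow> ('a \<Rightarrow> 'a) \<Rightarrow> nat \<Rightarrow> bool" where
  "gamma_type3 M z T k \<longleftrightarrow> (\<exists>c. c \<in> M - {z} \<and> 1 \<le> k \<and> (T ^^ k) c = c \<and>
     inj_on (\<lambda>i. (T ^^ i) c) {..<k} \<and>
     (\<forall>v\<in>M - {z}. \<exists>n. (T ^^ n) v \<in> (\<lambda>i. (T ^^ i) c) ` {..<k}))"

(* Localization M_t: pairs (m,a) standing for m/t^a *)
definition loc_rel :: "'a set \<Rightarrow> ('a \<Rightarrow> 'a) \<Rightarrow> (('a \<times> nat) \<times> ('a \<times> nat)) set" where
  "loc_rel M T = {((m, a), (m', b)). m \<in> M \<and> m' \<in> M \<and>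
      (\<exists>j. (T ^^ (j + b)) m = (T ^^ (j + a)) m')}"

definition loc_carrier :: "'a set \<Rightarrow> ('a \<Rightarrow> 'a) \<Rightarrow> ('a \<times> nat) set set" where
  "loc_carrier M T = (M \<times> UNIV) // loc_rel M T"

definition loc_pt :: "'a set \<Rightarrow> ('a \<Rightarrow> 'a) \<Rightarrow> 'a \<Rightarrow> ('a \<times> nat) set" where
  "loc_pt M T z = loc_rel M T `` {(z, 0)}"

definition loc_act :: "'a set \<Rightarrow> ('a \<Rightarrow> 'a) \<Rightarrow> ('a \<times> nat) set \<Rightarrow> ('a \<times> nat) set" where
  "loc_act M T X = loc_rel M T `` ((\<lambda>(m, a). (T m, a)) ` X)"

(* isomorphism of <t,t^-1>-modules (pointed bijection commuting with t;
   commuting with t^-1 then follows) *)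
definition mod_iso :: "'a set \<Rightarrow> 'a \<Rightarrow> ('a \<Rightarrow> 'a) \<Rightarrow> 'b set \<Rightarrow> 'b \<Rightarrow> ('b \<Rightarrow> 'b) \<Rightarrow> bool" where
  "mod_iso M z T N w S \<longleftrightarrow> (\<exists>f. bij_betw f M N \<and> f z = w \<and> (\<forall>x\<in>M. f (T x) = S (f x)))"

(* F|_U as a <t,t^-1>-module is M_t *)
definition restr_iso :: "'a set \<Rightarrow> 'a \<Rightarrow> ('a \<Rightarrow> 'a) \<Rightarrow> 'b set \<Rightarrow> 'b \<Rightarrow> ('b \<Rightarrow> 'b) \<Rightarrow> bool" where
  "restr_iso M z T N w S \<longleftrightarrow> mod_iso (loc_carrier M T) (loc_pt M T z) (loc_act M T) N w S"

(* <t,t^-1> itself: None = 0, Some n = t^n *)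
definition L_carrier :: "int option set" where "L_carrier = UNIV"
definition L_act :: "int option \<Rightarrow> int option" where "L_act = map_option (\<lambda>n. n + 1)"

(* C_k: None = *, Some i = t^i, i < k, cyclic action *)
definition C_carrier :: "nat \<Rightarrow> nat option set" where
  "C_carrier k = insert None (Some ` {..<k})"
definition C_act :: "nat \<Rightarrow> nat option \<Rightarrow> nat option" where
  "C_act k = map_option (\<lambda>i. (i + 1) mod k)"

end

theory Submission
  imports Defs
begin

text \<open>
  Every non-zero element of \<open>M\<close> is eventually mapped by \<open>t\<close> either to \<open>*\<close> (type 1), or into
  the orbit of a single element \<open>c\<close> that never reaches \<open>*\<close>: the ray \<open>v\<^sub>0, t v\<^sub>0, \<dots>\<close> (type 2) or
  the oriented cycle (type 3). An element \<open>m/t\<^sup>a\<close> of \<open>M\<^sub>t\<close> with \<open>t\<^sup>p m = t\<^sup>q c\<close> then only depends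
  on the exponent \<open>q - p - a \<in> \<int>\<close>, taken modulo the period of the orbit of \<open>c\<close>. So \<open>M\<^sub>t\<close> is
  \<open>0\<close> in type 1, \<open>\<langle>t,t\<^sup>-\<^sup>1\<rangle>\<close> in type 2 (infinite orbit) and \<open>C\<^sub>k\<close> in type 3 (period \<open>k\<close>).
\<close>

lemma funpow_funpow: "(f ^^ m) ((f ^^ n) x) = (f ^^ (m + n)) x"
  by (simp add: funpow_add)

lemma funpow_eq_shift:
  fixes f :: "'a \<Rightarrow> 'a"
  assumes "(f ^^ p) x = (f ^^ q) y"
  shows "(f ^^ (n + p)) x = (f ^^ (n + q)) y"
  by (simp add: funpow_add assms)

lemma tmod_funpow_closed: "tmod M z T \<Longrightarrow> m \<in> M \<Longrightarrow> (T ^^ n) m \<in> M"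
  by (induction n) (auto simp: tmod_def)

lemma tmod_funpow_zero: "tmod M z T \<Longrightarrow> (T ^^ n) z = z"
  by (induction n) (auto simp: tmod_def)

lemma tmod_funpow_zero_mono:
  assumes "tmod M z T" and "(T ^^ n) m = z" and "n \<le> k"
  shows "(T ^^ k) m = z"
proof -
  have "(T ^^ k) m = (T ^^ (k - n)) ((T ^^ n) m)"
    using \<open>n \<le> k\<close> by (simp add: funpow_funpow)
  then show ?thesis
    using assms(2) tmod_funpow_zero[OF assms(1)] by simp
qed

lemma tmod_funpow_nonzero_if_meets_orbit:
  assumes tm: "tmod M z T" and meet: "(T ^^ p) m = (T ^^ q) c" and orbit_nonzero: "\<And>n. (T ^^ n) c \<noteq> z"
  shows "(T ^^ n) m \<noteq> z"
proof
  assume zero: "(T ^^ n) m = z"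
  have "(T ^^ (n + q)) c = (T ^^ (n + p)) m"
    using funpow_eq_shift[OF meet] by simp
  also have "\<dots> = (T ^^ p) ((T ^^ n) m)"
    by (simp only: funpow_funpow ac_simps)
  also have "\<dots> = z"
    using zero tmod_funpow_zero[OF tm] by simp
  finally show False
    using orbit_nonzero by blast
qed

lemma funpow_eventually_eq_iff_orbit:
  fixes T :: "'a \<Rightarrow> 'a"
  assumes pq: "(T ^^ p) m = (T ^^ q) c" and pq': "(T ^^ p') m' = (T ^^ q') c"
    and cancel: "\<And>j x y. (T ^^ (j + x)) c = (T ^^ (j + y)) c \<Longrightarrow> (T ^^ x) c = (T ^^ y) c"
  shows "(\<exists>j. (T ^^ (j + b)) m = (T ^^ (j + a)) m') \<longleftrightarrow> (T ^^ (q + (p' + b))) c = (T ^^ (q' + (p + a))) c"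
proof
  assume "\<exists>j. (T ^^ (j + b)) m = (T ^^ (j + a)) m'"
  then obtain j where "(T ^^ (j + b)) m = (T ^^ (j + a)) m'"
    by blast
  then have "(T ^^ (p + p')) ((T ^^ (j + b)) m) = (T ^^ (p + p')) ((T ^^ (j + a)) m')"
    by simp
  then have "(T ^^ (p' + j + b)) ((T ^^ p) m) = (T ^^ (p + j + a)) ((T ^^ p') m')"
    by (simp only: funpow_funpow ac_simps)
  then have "(T ^^ (j + (q + (p' + b)))) c = (T ^^ (j + (q' + (p + a)))) c"
    unfolding pq pq' funpow_funpow by (simp only: ac_simps)
  then show "(T ^^ (q + (p' + b))) c = (T ^^ (q' + (p + a))) c"
    by (rule cancel)
next
  assume orbit: "(T ^^ (q + (p' + b))) c = (T ^^ (q' + (p + a))) c"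
  have "(T ^^ (p + p' + b)) m = (T ^^ (p' + b)) ((T ^^ p) m)"
    by (simp only: funpow_funpow ac_simps)
  also have "\<dots> = (T ^^ (q' + (p + a))) c"
    using orbit unfolding pq funpow_funpow by (simp only: ac_simps)
  also have "\<dots> = (T ^^ (p + a)) ((T ^^ p') m')"
    unfolding pq' funpow_funpow by (simp only: ac_simps)
  also have "\<dots> = (T ^^ (p + p' + a)) m'"
    by (simp only: funpow_funpow ac_simps)
  finally show "\<exists>j. (T ^^ (j + b)) m = (T ^^ (j + a)) m'"
    by blast
qed

lemma restr_iso_from_kernel:
  assumes kernel: "\<And>m m' a b. m \<in> M \<Longrightarrow> m' \<in> M \<Longrightarrow> ((m, a), (m', b)) \<in> loc_rel M T \<longleftrightarrow> h (m, a) = h (m', b)"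
    and onto: "h ` (M \<times> UNIV) = N"
    and "z \<in> M" and base: "h (z, 0) = w"
    and closed: "\<And>m. m \<in> M \<Longrightarrow> T m \<in> M"
    and equivariant: "\<And>m a. m \<in> M \<Longrightarrow> h (T m, a) = S (h (m, a))"
  shows "restr_iso M z T N w S"
proof -
  let ?A = "M \<times> UNIV" and ?R = "loc_rel M T"
  define fiber where "fiber y = {q \<in> ?A. h q = y}" for y
  have R_field: "?R \<subseteq> ?A \<times> ?A"
    unfolding loc_rel_def by auto
  have R_fiber: "?R `` {p} = fiber (h p)" if "p \<in> ?A" for p
    using that kernel R_field unfolding fiber_def by fastforce
  have fiber_nonempty: "fiber y \<noteq> {}" if "y \<in> N" for y
    using that unfolding onto[symmetric] fiber_def by auto
  have carrier: "loc_carrier M T = fiber ` N"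
    unfolding loc_carrier_def quotient_def using R_fiber onto by auto
  have "inj_on fiber N"
    by (rule inj_onI) (use fiber_nonempty in \<open>auto simp: fiber_def\<close>)
  then have fiber_bij: "bij_betw fiber N (loc_carrier M T)"
    unfolding carrier by (rule inj_on_imp_bij_betw)
  define f where "f = inv_into N fiber"
  have f_fiber: "f (fiber y) = y" if "y \<in> N" for y
    using that fiber_bij unfolding f_def by (simp add: bij_betw_def inv_into_f_f)
  have act_fiber: "loc_act M T (fiber y) = fiber (S y)" if "y \<in> N" for y
  proof -
    have shifted_class: "?R `` {(T (fst p), snd p)} = fiber (S y)" if "p \<in> fiber y" for p
    proof -
      have "fst p \<in> M" "h p = y"
        using that unfolding fiber_def by auto
      then show ?thesis
        using R_fiber[of "(T (fst p), snd p)"] closed equivariant[of "fst p" "snd p"] by simp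
    qed
    have "loc_act M T (fiber y) = (\<Union>p\<in>fiber y. ?R `` {(T (fst p), snd p)})"
      unfolding loc_act_def by auto
    also have "\<dots> = (\<Union>_\<in>fiber y. fiber (S y))"
      by (rule SUP_cong[OF refl]) (rule shifted_class)
    also have "\<dots> = fiber (S y)"
      using fiber_nonempty[OF that] by simp
    finally show ?thesis .
  qed
  have S_closed: "S y \<in> N" if y: "y \<in> N" for y
  proof -
    obtain m a where "m \<in> M" "y = h (m, a)"
      using y unfolding onto[symmetric] by auto
    then have "S y = h (T m, a)"
      using equivariant by simp
    then show ?thesis
      using closed \<open>m \<in> M\<close> unfolding onto[symmetric] by auto
  qed
  have "w \<in> N"
    unfolding onto[symmetric] using base \<open>z \<in> M\<close> by force
  have "loc_pt M T z = fiber w"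
    using R_fiber[of "(z, 0)"] base \<open>z \<in> M\<close> unfolding loc_pt_def by simp
  have "bij_betw f (loc_carrier M T) N"
    using fiber_bij unfolding f_def by (rule bij_betw_inv_into)
  moreover have "f (loc_pt M T z) = w"
    using f_fiber[OF \<open>w \<in> N\<close>] \<open>loc_pt M T z = fiber w\<close> by simp
  moreover have "f (loc_act M T X) = S (f X)" if X: "X \<in> loc_carrier M T" for X
  proof -
    obtain y where "y \<in> N" "X = fiber y"
      using X unfolding carrier by blast
    then show ?thesis
      using act_fiber f_fiber S_closed by simp
  qed
  ultimately show ?thesis
    unfolding restr_iso_def mod_iso_def by blast
qed

(* e d stands for the class of t^d c in M_t; the isomorphism sends m/t^a with t^p m = t^q c to
   e (q - p - a), which e_eq_iff makes independent of the choice of p and q. *)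
lemma restr_iso_onto_orbit:
  fixes e :: "int \<Rightarrow> 'b"
  assumes tm: "tmod M z T" and "c \<in> M"
    and reach: "\<And>m. m \<in> M \<Longrightarrow> m \<noteq> z \<Longrightarrow> \<exists>p q. (T ^^ p) m = (T ^^ q) c"
    and orbit_nonzero: "\<And>n. (T ^^ n) c \<noteq> z"
    and e_eq_iff: "\<And>x y u v. e (int x - int y) = e (int u - int v) \<longleftrightarrow> (T ^^ (x + v)) c = (T ^^ (u + y)) c"
    and "w \<notin> range e" and "S w = w" and e_shift: "\<And>d. S (e d) = e (d + 1)"
  shows "restr_iso M z T (insert w (range e)) w S"
proof -
  have nonzero_power: "(T ^^ n) m \<noteq> z" if m: "m \<in> M" "m \<noteq> z" for m n
    using reach[OF m] tmod_funpow_nonzero_if_meets_orbit[OF tm _ orbit_nonzero] by blast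
  have orbit_cancel: "(T ^^ x) c = (T ^^ y) c" if "(T ^^ (j + x)) c = (T ^^ (j + y)) c" for j x y
  proof -
    have "(T ^^ (j + x + j)) c = (T ^^ (j + y + j)) c"
      using funpow_eq_shift[OF that, of j] by (simp only: ac_simps)
    then have "e (int x) = e (int y)"
      using e_eq_iff[of "j + x" j "j + y" j] by simp
    then show ?thesis
      using e_eq_iff[of x 0 y 0] by simp
  qed
  define exps where "exps m = (SOME (p, q). (T ^^ p) m = (T ^^ q) c)" for m
  define h where "h = (\<lambda>(m, a). if m = z then w else case exps m of (p, q) \<Rightarrow> e (int q - int (p + a)))"
  have h_eq: "h (m, a) = e (int q - int (p + a))" if m: "m \<noteq> z" and pq: "(T ^^ p) m = (T ^^ q) c" for m a p q
  proof -
    obtain p' q' where exps: "exps m = (p', q')"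
      by fastforce
    have pq': "(T ^^ p') m = (T ^^ q') c"
      using someI[of "\<lambda>(p, q). (T ^^ p) m = (T ^^ q) c" "(p, q)"] pq exps
      unfolding exps_def by simp
    have "(T ^^ (a + p + q')) c = (T ^^ (a + p + p')) m"
      using funpow_eq_shift[OF pq', of "a + p"] by simp
    also have "\<dots> = (T ^^ (a + p' + q)) c"
      using funpow_eq_shift[OF pq, of "a + p'"] by (simp only: ac_simps)
    finally have "e (int q' - int (p' + a)) = e (int q - int (p + a))"
      by (intro e_eq_iff[THEN iffD2]) (simp only: ac_simps)
    then show ?thesis
      using m exps unfolding h_def by simp
  qed
  have h_zero: "h (z, a) = w" for a
    unfolding h_def by simp
  have h_nonzero: "h (m, a) \<noteq> w" if m: "m \<in> M" "m \<noteq> z" for m a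
  proof -
    obtain p q where "(T ^^ p) m = (T ^^ q) c"
      using reach m by blast
    then have "h (m, a) \<in> range e"
      using h_eq m by simp
    then show ?thesis
      using \<open>w \<notin> range e\<close> by auto
  qed
  have kernel: "((m, a), (m', b)) \<in> loc_rel M T \<longleftrightarrow> h (m, a) = h (m', b)"
    if m: "m \<in> M" and m': "m' \<in> M" for m m' a b
  proof -
    have rel: "((m, a), (m', b)) \<in> loc_rel M T \<longleftrightarrow> (\<exists>j. (T ^^ (j + b)) m = (T ^^ (j + a)) m')"
      using m m' unfolding loc_rel_def by simp
    consider "m = z" "m' = z" | "m = z" "m' \<noteq> z" | "m \<noteq> z" "m' = z" | "m \<noteq> z" "m' \<noteq> z"
      by blast
    then show ?thesis
    proof cases
      case 1
      then show ?thesis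
        using rel h_zero by (simp add: tmod_funpow_zero[OF tm])
    next
      case 2
      then show ?thesis
        using rel h_zero h_nonzero[OF m' 2(2), symmetric] nonzero_power[OF m' 2(2), symmetric]
        by (simp add: tmod_funpow_zero[OF tm])
    next
      case 3
      then show ?thesis
        using rel h_zero h_nonzero[OF m 3(1)] nonzero_power[OF m 3(1)]
        by (simp add: tmod_funpow_zero[OF tm])
    next
      case 4
      obtain p q where pq: "(T ^^ p) m = (T ^^ q) c"
        using reach m 4 by blast
      obtain p' q' where pq': "(T ^^ p') m' = (T ^^ q') c"
        using reach m' 4 by blast
      have "(\<exists>j. (T ^^ (j + b)) m = (T ^^ (j + a)) m') \<longleftrightarrow> (T ^^ (q + (p' + b))) c = (T ^^ (q' + (p + a))) c"
        using pq pq' orbit_cancel by (rule funpow_eventually_eq_iff_orbit)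
      then show ?thesis
        using rel h_eq[OF 4(1) pq] h_eq[OF 4(2) pq'] e_eq_iff[of q "p + a" q' "p' + b"] by simp
    qed
  qed
  have onto: "h ` (M \<times> UNIV) = insert w (range e)"
  proof
    have "h (m, a) \<in> insert w (range e)" for m a
      unfolding h_def by (simp split: prod.split)
    then show "h ` (M \<times> UNIV) \<subseteq> insert w (range e)"
      by auto
    have "e d = h ((T ^^ nat d) c, nat (- d))" for d
      using h_eq[of "(T ^^ nat d) c" 0 "nat d"] orbit_nonzero by simp
    then have "e d \<in> h ` (M \<times> UNIV)" for d
      by (rule image_eqI) (simp add: tmod_funpow_closed[OF tm \<open>c \<in> M\<close>])
    moreover have "w \<in> h ` (M \<times> UNIV)"
      using h_zero[of 0] tm unfolding tmod_def by force
    ultimately show "insert w (range e) \<subseteq> h ` (M \<times> UNIV)"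
      by blast
  qed
  have equivariant: "h (T m, a) = S (h (m, a))" if m: "m \<in> M" for m a
  proof (cases "m = z")
    case True
    then show ?thesis
      using tm \<open>S w = w\<close> h_zero unfolding tmod_def by simp
  next
    case False
    obtain p q where pq: "(T ^^ p) m = (T ^^ q) c"
      using reach m False by blast
    then have "(T ^^ p) (T m) = (T ^^ Suc q) c"
      by (simp flip: funpow_swap1)
    then have "h (T m, a) = e (int (Suc q) - int (p + a))"
      by (rule h_eq[rotated]) (use nonzero_power[OF m False, of 1] in simp)
    then show ?thesis
      using h_eq[OF False pq] e_shift by (simp add: algebra_simps)
  qed
  show ?thesis
    by (rule restr_iso_from_kernel[OF kernel onto _ h_zero _ equivariant]) (use tm in \<open>auto simp: tmod_def\<close>)
qed

lemma restr_iso_trivial_if_nilpotent: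
  assumes tm: "tmod M z T" and nilpotent: "\<And>m. m \<in> M \<Longrightarrow> \<exists>n. (T ^^ n) m = z"
  shows "restr_iso M z T {()} () id"
proof (rule restr_iso_from_kernel[where h = "\<lambda>_. ()"])
  fix m m' a b
  assume "m \<in> M" "m' \<in> M"
  then obtain n n' where n: "(T ^^ n) m = z" and n': "(T ^^ n') m' = z"
    using nilpotent by blast
  have "(T ^^ (n + n' + b)) m = z" "(T ^^ (n + n' + a)) m' = z"
    by (rule tmod_funpow_zero_mono[OF tm n], simp) (rule tmod_funpow_zero_mono[OF tm n'], simp)
  then show "((m, a), (m', b)) \<in> loc_rel M T \<longleftrightarrow> () = ()"
    using \<open>m \<in> M\<close> \<open>m' \<in> M\<close> unfolding loc_rel_def by (auto intro!: exI[of _ "n + n'"])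
qed (use tm in \<open>auto simp: tmod_def\<close>)

lemma rooted_tree_reaches_root:
  assumes "rooted_tree S T" and "v \<in> S"
  obtains r n where "r \<in> S" "T r \<notin> S" "(T ^^ n) v = r"
proof -
  have "\<exists>!r. r \<in> S \<and> T r \<notin> S"
    using assms(1) unfolding rooted_tree_def by (rule conjunct2[THEN conjunct1])
  then obtain r where r: "r \<in> S" "T r \<notin> S"
    by blast
  have "\<forall>v\<in>S. \<forall>r\<in>S. T r \<notin> S \<longrightarrow> (\<exists>n. (\<forall>i\<le>n. (T ^^ i) v \<in> S) \<and> (T ^^ n) v = r)"
    using assms(1) unfolding rooted_tree_def by (rule conjunct2[THEN conjunct2])
  then obtain n where "(T ^^ n) v = r"
    using r assms(2) by blast
  then show ?thesis
    using that r by blast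
qed

lemma gamma_type1_nilpotent:
  assumes tm: "tmod M z T" and type1: "gamma_type1 M z T" and "m \<in> M"
  shows "\<exists>n. (T ^^ n) m = z"
proof (cases "m = z")
  case True
  then show ?thesis
    by (intro exI[of _ 0]) simp
next
  case False
  obtain r n where r: "r \<in> M - {z}" "T r \<notin> M - {z}" and "(T ^^ n) m = r"
    using rooted_tree_reaches_root[of "M - {z}" T m] type1 \<open>m \<in> M\<close> False
    unfolding gamma_type1_def by blast
  moreover have "T r = z"
    using tm r unfolding tmod_def by blast
  ultimately have "(T ^^ Suc n) m = z"
    by simp
  then show ?thesis
    by blast
qed

lemma gamma_type2_restr_iso:
  assumes tm: "tmod M z T" and "gamma_type2 M z T"
  shows "restr_iso M z T L_carrier None L_act"
proof -
  obtain Tr v0 where tree: "rooted_tree Tr T"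
    and ray_inj: "\<forall>i j. (T ^^ i) v0 = (T ^^ j) v0 \<longrightarrow> i = j"
    and vertices: "M - {z} = Tr \<union> range (\<lambda>i. (T ^^ i) v0)"
    and tree_root: "\<forall>r\<in>Tr. T r \<notin> Tr \<longrightarrow> T r = v0"
    using assms(2) unfolding gamma_type2_def by (elim exE conjE)
  have ray: "(T ^^ i) v0 \<in> M - {z}" for i
    using vertices by blast
  have reach: "\<exists>p q. (T ^^ p) m = (T ^^ q) v0" if m: "m \<in> M" "m \<noteq> z" for m
  proof (cases "m \<in> Tr")
    case True
    obtain r n where "r \<in> Tr" "T r \<notin> Tr" "(T ^^ n) m = r"
      using tree True by (rule rooted_tree_reaches_root)
    then have "(T ^^ Suc n) m = (T ^^ 0) v0"
      using tree_root by simp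
    then show ?thesis
      by blast
  next
    case False
    then obtain i where "m = (T ^^ i) v0"
      using vertices m by blast
    then have "(T ^^ 0) m = (T ^^ i) v0"
      by simp
    then show ?thesis
      by blast
  qed
  show ?thesis
    unfolding L_carrier_def UNIV_option_conv
  proof (rule restr_iso_onto_orbit[OF tm])
    show "v0 \<in> M" "(T ^^ n) v0 \<noteq> z" for n
      using ray[of 0] ray[of n] by auto
    show "\<exists>p q. (T ^^ p) m = (T ^^ q) v0" if "m \<in> M" "m \<noteq> z" for m
      using reach that .
    have "Some (int x - int y) = Some (int u - int v) \<longleftrightarrow> x + v = u + y" for x y u v
      by auto
    also have "x + v = u + y \<longleftrightarrow> (T ^^ (x + v)) v0 = (T ^^ (u + y)) v0" for x y u v
      using ray_inj by auto
    finally show "Some (int x - int y) = Some (int u - int v) \<longleftrightarrow> (T ^^ (x + v)) v0 = (T ^^ (u + y)) v0"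
      for x y u v .
  qed (simp_all add: L_act_def)
qed

lemma nat_diff_mod_eq_iff:
  fixes k :: nat
  assumes "0 < k"
  shows "nat ((int x - int y) mod int k) = nat ((int u - int v) mod int k) \<longleftrightarrow> (x + v) mod k = (u + y) mod k"
proof -
  have "nat ((int x - int y) mod int k) = nat ((int u - int v) mod int k)
      \<longleftrightarrow> (int x - int y) mod int k = (int u - int v) mod int k"
    using assms by (simp add: nat_eq_iff)
  also have "\<dots> \<longleftrightarrow> int k dvd (int x - int y) - (int u - int v)"
    by (rule mod_eq_dvd_iff)
  also have "\<dots> \<longleftrightarrow> int k dvd int (x + v) - int (u + y)"
    by (simp add: algebra_simps)
  also have "\<dots> \<longleftrightarrow> int (x + v) mod int k = int (u + y) mod int k"
    by (rule mod_eq_dvd_iff[symmetric])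
  also have "\<dots> \<longleftrightarrow> (x + v) mod k = (u + y) mod k"
    by (simp only: zmod_int[symmetric] of_nat_eq_iff)
  finally show ?thesis .
qed

lemma nat_mod_plus_one:
  fixes k :: nat
  assumes "0 < k"
  shows "(nat (d mod int k) + 1) mod k = nat ((d + 1) mod int k)"
proof -
  have "int ((nat (d mod int k) + 1) mod k) = (d mod int k + 1) mod int k"
    using assms by (simp add: zmod_int ac_simps)
  also have "\<dots> = (d + 1) mod int k"
    by (simp add: mod_add_left_eq)
  also have "\<dots> = int (nat ((d + 1) mod int k))"
    using assms by simp
  finally show ?thesis
    by linarith
qed

lemma gamma_type3_restr_iso:
  assumes tm: "tmod M z T" and "gamma_type3 M z T k"
  shows "restr_iso M z T (C_carrier k) None (C_act k)"
proof -
  obtain c where c: "c \<in> M - {z}" and "1 \<le> k" and period: "(T ^^ k) c = c"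
    and cycle_inj: "inj_on (\<lambda>i. (T ^^ i) c) {..<k}"
    and reach_cycle: "\<forall>v\<in>M - {z}. \<exists>n. (T ^^ n) v \<in> (\<lambda>i. (T ^^ i) c) ` {..<k}"
    using assms(2) unfolding gamma_type3_def by blast
  then have "0 < k"
    by simp
  have cycle_eq_iff: "(T ^^ x) c = (T ^^ y) c \<longleftrightarrow> x mod k = y mod k" for x y
  proof
    assume "(T ^^ x) c = (T ^^ y) c"
    then have "(T ^^ (x mod k)) c = (T ^^ (y mod k)) c"
      by (simp add: funpow_mod_eq[OF period])
    then show "x mod k = y mod k"
      using cycle_inj \<open>0 < k\<close> by (auto dest: inj_onD)
  next
    assume "x mod k = y mod k"
    then show "(T ^^ x) c = (T ^^ y) c"
      by (metis funpow_mod_eq[OF period])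
  qed
  have orbit_nonzero: "(T ^^ n) c \<noteq> z" for n
  proof
    assume "(T ^^ n) c = z"
    moreover have "n \<le> k * Suc n"
      using \<open>0 < k\<close> by (cases k) auto
    ultimately have "(T ^^ (k * Suc n)) c = z"
      by (rule tmod_funpow_zero_mono[OF tm])
    then show False
      using cycle_eq_iff[of "k * Suc n" 0] c by simp
  qed
  define e where "e d = Some (nat (d mod int k))" for d
  have "range e = Some ` {..<k}"
  proof
    show "range e \<subseteq> Some ` {..<k}"
      using \<open>0 < k\<close> unfolding e_def by (simp add: image_subset_iff nat_less_iff)
    have "Some i = e (int i)" if "i < k" for i
      using that unfolding e_def by (simp flip: zmod_int)
    then show "Some ` {..<k} \<subseteq> range e"
      by auto
  qed
  then have carrier: "C_carrier k = insert None (range e)"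
    unfolding C_carrier_def by simp
  show ?thesis
    unfolding carrier
  proof (rule restr_iso_onto_orbit[OF tm])
    show "\<exists>p q. (T ^^ p) m = (T ^^ q) c" if "m \<in> M" "m \<noteq> z" for m
      using reach_cycle that by blast
    show "e (int x - int y) = e (int u - int v) \<longleftrightarrow> (T ^^ (x + v)) c = (T ^^ (u + y)) c" for x y u v
      unfolding e_def cycle_eq_iff using nat_diff_mod_eq_iff[OF \<open>0 < k\<close>] by simp
    show "C_act k (e d) = e (d + 1)" for d
      unfolding e_def C_act_def using nat_mod_plus_one[OF \<open>0 < k\<close>] by simp
    show "c \<in> M" "(T ^^ n) c \<noteq> z" for n
      using c orbit_nonzero by auto
    show "None \<notin> range e" "C_act k None = None"
      unfolding e_def C_act_def by auto
  qed
qed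

theorem mainTheorem11:
  fixes M :: "'a set" and z :: 'a and T :: "'a \<Rightarrow> 'a"
  assumes "tmod M z T" and "fin_gen M z T" and "indecomposable M z T"
  shows "(gamma_type1 M z T \<longrightarrow> restr_iso M z T {()} () id)
       \<and> (gamma_type2 M z T \<longrightarrow> restr_iso M z T L_carrier None L_act)
       \<and> (\<forall>k. gamma_type3 M z T k \<longrightarrow> restr_iso M z T (C_carrier k) None (C_act k))"
  using restr_iso_trivial_if_nilpotent[OF assms(1) gamma_type1_nilpotent[OF assms(1)]]
    gamma_type2_restr_iso[OF assms(1)] gamma_type3_restr_iso[OF assms(1)]
  by blast

end
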